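(* For every $m\ge1$ and every probability mass function $(g_k)_{k\in\mathbb Z}$ of a sum of $m$ independent Bernoulli random variables (extended by $0$ outside $\{0,\ldots,m\}$), the following hold for all $k\in\mathbb Z$: $$g_k^2g_{k+1}-2g_{k+1}^2g_{k-1}+g_{k+2}g_kg_{k-1}\ge0,$$ $$g_k^3-g_{k-1}g_kg_{k+1}-g_{k-1}^2g_{k+2}+g_{k-2}g_kg_{k+2}\ge0,$$ $$g_k^3-g_{k-1}g_kg_{k+1}-g_{k+1}^2g_{k-2}+g_{k-2}g_kg_{k+2}\ge0,$$ $$2g_k^3-3g_{k-1}g_kg_{k+1}+g_{k-1}^2g_{k+2}\ge0,$$ $$2g_k^3-3g_{k-1}g_kg_{k+1}+g_{k+1}^2g_{k-2}\ge0,$$ $$2g_k^2g_{k-2}-3g_{k-2}g_{k-1}g_{k+1}+g_{k+1}g_kg_{k-3}\ge0.$$ *)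

theory Defs
  imports "HOL-Probability.Probability"
begin

fun bernoulli_sum_pmf :: "real list \<Rightarrow> int pmf" where
  "bernoulli_sum_pmf [] = return_pmf 0"
| "bernoulli_sum_pmf (p # ps) =
     map_pmf (\<lambda>(b, s). (if b then 1 else 0) + s)
       (pair_pmf (bernoulli_pmf p) (bernoulli_sum_pmf ps))"

end

theory Submission
  imports Defs
begin

text \<open>The distribution g of a sum of independent Bernoulli variables arises by repeatedly
  convolving with two-point distributions. Throughout, the support of g stays an interval and the
  ratios r j = g j / g (j - 1) stay nonincreasing and convex: convolving with (1 - p, p) turns
  r j into r (j - 1) * (x + r j) / (x + r (j - 1)) with x = p / (1 - p), and this map preserves
  both properties. The same holds for the reflected sequence j \<mapsto> g (-j), which up to a shift
  is the distribution for the probabilities 1 - p. Clearing denominators, convexity of the ratios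
  is the first inequality and their monotonicity is log-concavity. Multiplied by g k (resp.
  g (k - 1)), each of the other inequalities becomes a nonnegative combination of the first one,
  its reflection and products of log-concavity defects; the third and fifth are the second and
  fourth for the reflected sequence.\<close>

definition conv_ratio :: "real \<Rightarrow> real \<Rightarrow> real \<Rightarrow> real" where
  "conv_ratio x P Q = P * (x + Q) / (x + P)"

lemma conv_ratio_mono:
  assumes "x > 0" "0 \<le> P'" "P' \<le> P" "0 \<le> Q'" "Q' \<le> Q"
  shows "conv_ratio x P' Q' \<le> conv_ratio x P Q"
proof -
  have "P' / (x + P') \<le> P / (x + P)"
    using assms by (simp add: divide_simps) (simp add: algebra_simps mult_right_mono)
  then have "P' / (x + P') * (x + Q') \<le> P / (x + P) * (x + Q)"
    using assms by (intro mult_mono) auto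
  then show ?thesis unfolding conv_ratio_def by simp
qed

lemma conv_ratio_le:
  assumes "x > 0" "0 \<le> Q" "Q \<le> P"
  shows "conv_ratio x P Q \<le> P"
proof -
  have "conv_ratio x P Q \<le> conv_ratio x P P"
    using assms by (intro conv_ratio_mono) auto
  also have "\<dots> = P"
    using assms by (simp add: conv_ratio_def)
  finally show ?thesis .
qed

text \<open>In both convexity lemmas the numerator of the second difference, rewritten in terms of
  the last value, the last difference and the second differences, is a polynomial with
  nonnegative coefficients.\<close>

lemma conv_ratio_convex:
  fixes p0 p1 p2 p3 x :: real
  assumes x: "x > 0" and "0 \<le> p3" "p3 \<le> p2"
    and "0 \<le> p1 - 2 * p2 + p3" and "0 \<le> p0 - 2 * p1 + p2"
  shows "0 \<le> conv_ratio x p0 p1 - 2 * conv_ratio x p1 p2 + conv_ratio x p2 p3"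
proof -
  define a d e2 e1 where "a = p3" and "d = p2 - p3"
    and "e2 = p1 - 2 * p2 + p3" and "e1 = p0 - 2 * p1 + p2"
  have nonneg: "a \<ge> 0" "d \<ge> 0" "e2 \<ge> 0" "e1 \<ge> 0"
    using assms by (auto simp: a_def d_def e2_def e1_def)
  have p: "p3 = a" "p2 = a + d" "p1 = a + 2*d + e2" "p0 = a + 3*d + 2*e2 + e1"
    by (auto simp: a_def d_def e2_def e1_def)
  have pos: "x + p0 > 0" "x + p1 > 0" "x + p2 > 0"
    using nonneg x unfolding p by auto
  have eq: "conv_ratio x p0 p1 - 2 * conv_ratio x p1 p2 + conv_ratio x p2 p3 =
     (p0*(x+p1)*(x+p1)*(x+p2) - 2*(p1*(x+p2)*(x+p0)*(x+p2)) + p2*(x+p3)*(x+p0)*(x+p1))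
       / ((x+p0)*(x+p1)*(x+p2))"
    (is "_ = ?N / ?D")
    using pos unfolding conv_ratio_def by (simp add: divide_simps) (simp add: algebra_simps)
  have "?N =
    2*e2^3*x + e1*x^3 + e1*e2^2*x + d*e2*x^2 + 9*d*e2^2*x + 2*d*e2^3 + 2*d*e1*x^2
      + 3*d*e1*e2*x + d*e1*e2^2 + 11*d^2*e2*x + 7*d^2*e2^2 + 2*d^2*e1*x + 2*d^2*e1*e2
      + 2*d^3*x + 6*d^3*e2 + a*e2*x^2 + 3*a*e2^2*x + 2*a*e2^3 + 2*a*e1*x^2 + a*e1*e2*x
      + a*e1*e2^2 + 7*a*d*e2*x + 10*a*d*e2^2 + 2*a*d*e1*x + 3*a*d*e1*e2 + 11*a*d^2*e2
      + 2*a^2*e2*x + 3*a^2*e2^2 + a^2*e1*x + a^2*e1*e2 + 6*a^2*d*e2 + a^3*e2"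
    unfolding p by (simp add: algebra_simps power2_eq_square power3_eq_cube)
  then have "0 \<le> ?N"
    using nonneg x by (simp only:) (intro add_nonneg_nonneg mult_nonneg_nonneg zero_le_power; simp)
  then show ?thesis
    unfolding eq using pos by simp
qed

lemma conv_ratio_convex_start:
  fixes p1 p2 p3 x :: real
  assumes x: "x > 0" and "0 \<le> p3" "p3 \<le> p2" and "0 \<le> p1 - 2 * p2 + p3"
  shows "0 \<le> (x + p1) - 2 * conv_ratio x p1 p2 + conv_ratio x p2 p3"
proof -
  define a d e2 where "a = p3" and "d = p2 - p3" and "e2 = p1 - 2 * p2 + p3"
  have nonneg: "a \<ge> 0" "d \<ge> 0" "e2 \<ge> 0"
    using assms by (auto simp: a_def d_def e2_def)
  have p: "p3 = a" "p2 = a + d" "p1 = a + 2*d + e2"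
    by (auto simp: a_def d_def e2_def)
  have pos: "x + p1 > 0" "x + p2 > 0"
    using nonneg x unfolding p by auto
  have eq: "(x + p1) - 2 * conv_ratio x p1 p2 + conv_ratio x p2 p3 =
     ((x+p1)*(x+p1)*(x+p2) - 2*(p1*(x+p2)*(x+p2)) + p2*(x+p3)*(x+p1)) / ((x+p1)*(x+p2))"
    (is "_ = ?N / ?D")
    using pos unfolding conv_ratio_def by (simp add: divide_simps) (simp add: algebra_simps)
  have "?N =
    x^3 + e2^2*x + 2*d*x^2 + 3*d*e2*x + d*e2^2 + 2*d^2*x + 2*d^2*e2 + 2*a*x^2 + a*e2*x
      + a*e2^2 + 2*a*d*x + 3*a*d*e2 + a^2*x + a^2*e2"
    unfolding p by (simp add: algebra_simps power2_eq_square power3_eq_cube)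
  then have "0 \<le> ?N"
    using nonneg x by (simp only:) (intro add_nonneg_nonneg mult_nonneg_nonneg zero_le_power; simp)
  then show ?thesis
    unfolding eq using pos by simp
qed

definition ratio :: "(int \<Rightarrow> real) \<Rightarrow> int \<Rightarrow> real" where
  "ratio g j = g j / g (j - 1)"

text \<open>Past the support the ratios are 0 (as 0 / 0 = 0 in HOL), so the last two conditions also
  cover the right end of the support.\<close>

definition convex_ratios :: "(int \<Rightarrow> real) \<Rightarrow> int \<Rightarrow> nat \<Rightarrow> bool" where
  "convex_ratios g s n \<longleftrightarrow> (\<forall>j. 0 \<le> g j) \<and> (\<forall>j. 0 < g j \<longleftrightarrow> s \<le> j \<and> j \<le> s + int n) \<and>
     (\<forall>j\<ge>s+1. ratio g (j+1) \<le> ratio g j) \<and>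
     (\<forall>j\<ge>s+1. 0 \<le> ratio g j - 2 * ratio g (j+1) + ratio g (j+2))"

lemma
  assumes "convex_ratios g s n"
  shows convex_ratios_nonneg: "0 \<le> g j"
    and convex_ratios_pos_iff: "0 < g j \<longleftrightarrow> s \<le> j \<and> j \<le> s + int n"
    and convex_ratios_antitone: "j \<ge> s + 1 \<Longrightarrow> ratio g (j+1) \<le> ratio g j"
    and convex_ratios_convex: "j \<ge> s + 1 \<Longrightarrow> 0 \<le> ratio g j - 2 * ratio g (j+1) + ratio g (j+2)"
  using assms unfolding convex_ratios_def by auto

lemma convex_ratios_zero_iff:
  assumes "convex_ratios g s n"
  shows "g j = 0 \<longleftrightarrow> j < s \<or> s + int n < j"
  using convex_ratios_nonneg[OF assms, of j] convex_ratios_pos_iff[OF assms, of j] by auto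

lemma convex_ratios_ratio_nonneg: "convex_ratios g s n \<Longrightarrow> 0 \<le> ratio g j"
  unfolding ratio_def by (simp add: convex_ratios_nonneg)

lemma convex_ratios_scale:
  assumes "convex_ratios g s n" "c > 0"
  shows "convex_ratios (\<lambda>j. c * g j) s n"
proof -
  have "ratio (\<lambda>j. c * g j) = ratio g"
    using assms(2) by (auto simp: ratio_def)
  then show ?thesis
    using assms unfolding convex_ratios_def by (simp add: zero_less_mult_iff)
qed

lemma convex_ratios_shift:
  assumes "convex_ratios g s n"
  shows "convex_ratios (\<lambda>j. g (j + c)) (s - c) n"
proof -
  have "ratio (\<lambda>j. g (j + c)) j = ratio g (j + c)" for j
    unfolding ratio_def by (simp add: algebra_simps)
  then show ?thesis
    using assms unfolding convex_ratios_def
    by (auto simp: algebra_simps dest: spec[of _ "_ + c"])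
qed

lemma ratio_conv:
  assumes g: "convex_ratios g s n" and x: "x > 0" and j: "j \<ge> s + 2"
  shows "ratio (\<lambda>j. g j + x * g (j - 1)) j = conv_ratio x (ratio g (j - 1)) (ratio g j)"
proof (cases "g (j - 1) = 0")
  case True
  then have "g j = 0"
    using convex_ratios_zero_iff[OF g] j by auto
  with True show ?thesis
    by (simp add: ratio_def conv_ratio_def)
next
  case False
  then have "g (j - 1) > 0" "g (j - 2) > 0"
    using convex_ratios_zero_iff[OF g] convex_ratios_pos_iff[OF g] j by auto
  with x show ?thesis
    unfolding ratio_def conv_ratio_def by (simp add: divide_simps) (simp add: algebra_simps)
qed

lemma ratio_conv_start:
  assumes g: "convex_ratios g s n"
  shows "ratio (\<lambda>j. g j + x * g (j - 1)) (s + 1) = x + ratio g (s + 1)"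
proof -
  have "g (s - 1) = 0" "g s > 0"
    using convex_ratios_zero_iff[OF g] convex_ratios_pos_iff[OF g] by auto
  then show ?thesis
    unfolding ratio_def by (simp add: field_simps)
qed

lemma conv_pos_iff:
  assumes g: "convex_ratios g s n" and x: "x > 0"
  shows "0 < g j + x * g (j - 1) \<longleftrightarrow> s \<le> j \<and> j \<le> s + int (Suc n)"
proof -
  have "0 \<le> x * g (j - 1)" "0 < x * g (j - 1) \<longleftrightarrow> 0 < g (j - 1)"
    using convex_ratios_nonneg[OF g, of "j - 1"] x by (simp_all add: zero_less_mult_iff)
  then have "0 < g j + x * g (j - 1) \<longleftrightarrow> 0 < g j \<or> 0 < g (j - 1)"
    using convex_ratios_nonneg[OF g, of j] by arith
  also have "\<dots> \<longleftrightarrow> s \<le> j \<and> j \<le> s + int (Suc n)"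
    using convex_ratios_pos_iff[OF g, of j] convex_ratios_pos_iff[OF g, of "j - 1"] by auto
  finally show ?thesis .
qed

lemma ratio_conv_antitone:
  assumes g: "convex_ratios g s n" and x: "x > 0" and j: "j \<ge> s + 1"
  shows "ratio (\<lambda>j. g j + x * g (j - 1)) (j + 1) \<le> ratio (\<lambda>j. g j + x * g (j - 1)) j"
proof -
  let ?h = "\<lambda>j. g j + x * g (j - 1)"
  note r_nonneg = convex_ratios_ratio_nonneg[OF g]
  note r_antitone = convex_ratios_antitone[OF g]
  have h1: "ratio ?h (j + 1) = conv_ratio x (ratio g j) (ratio g (j + 1))"
    using ratio_conv[OF g x, of "j + 1"] j by simp
  show ?thesis
  proof (cases "j = s + 1")
    case True
    have "conv_ratio x (ratio g j) (ratio g (j + 1)) \<le> ratio g j"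
      using x j r_nonneg[of "j + 1"] r_antitone[of j] by (intro conv_ratio_le) simp_all
    also have "\<dots> \<le> ratio ?h j"
      using ratio_conv_start[OF g, of x] True x by simp
    finally show ?thesis
      unfolding h1 .
  next
    case False
    then have h0: "ratio ?h j = conv_ratio x (ratio g (j - 1)) (ratio g j)"
      using ratio_conv[OF g x, of j] j by simp
    show ?thesis
      unfolding h0 h1
      using x r_nonneg[of j] r_nonneg[of "j + 1"] r_antitone[of "j - 1"] r_antitone[of j] j False
      by (intro conv_ratio_mono) simp_all
  qed
qed

lemma ratio_conv_convex:
  assumes g: "convex_ratios g s n" and x: "x > 0" and j: "j \<ge> s + 1"
  shows "0 \<le> ratio (\<lambda>j. g j + x * g (j - 1)) j - 2 * ratio (\<lambda>j. g j + x * g (j - 1)) (j + 1)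
    + ratio (\<lambda>j. g j + x * g (j - 1)) (j + 2)"
proof -
  let ?h = "\<lambda>j. g j + x * g (j - 1)"
  note r_nonneg = convex_ratios_ratio_nonneg[OF g]
  note r_antitone = convex_ratios_antitone[OF g]
  note r_convex = convex_ratios_convex[OF g]
  have h1: "ratio ?h (j + 1) = conv_ratio x (ratio g j) (ratio g (j + 1))"
    using ratio_conv[OF g x, of "j + 1"] j by simp
  have h2: "ratio ?h (j + 2) = conv_ratio x (ratio g (j + 1)) (ratio g (j + 2))"
    using ratio_conv[OF g x, of "j + 2"] j by (simp add: ac_simps)
  show ?thesis
  proof (cases "j = s + 1")
    case True
    then have h0: "ratio ?h j = x + ratio g j"
      using ratio_conv_start[OF g] by simp
    show ?thesis
      unfolding h0 h1 h2
      using x j r_nonneg[of "j + 2"] r_antitone[of "j + 1"] r_convex[of j]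
      by (intro conv_ratio_convex_start) (simp_all add: add.assoc)
  next
    case False
    then have h0: "ratio ?h j = conv_ratio x (ratio g (j - 1)) (ratio g j)"
      using ratio_conv[OF g x, of j] j by simp
    show ?thesis
      unfolding h0 h1 h2
      using x j False r_nonneg[of "j + 2"] r_antitone[of "j + 1"]
        r_convex[of j] r_convex[of "j - 1"]
      by (intro conv_ratio_convex) (simp_all add: ac_simps)
  qed
qed

lemma convex_ratios_conv:
  assumes g: "convex_ratios g s n" and x: "x > 0"
  shows "convex_ratios (\<lambda>j. g j + x * g (j - 1)) s (Suc n)"
  using convex_ratios_nonneg[OF g] x conv_pos_iff[OF g x] ratio_conv_antitone[OF g x]
    ratio_conv_convex[OF g x]
  unfolding convex_ratios_def by simp

lemma convex_ratios_vanishing: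
  assumes "convex_ratios g s n" "g k = 0"
  shows "(\<forall>j\<le>k. g j = 0) \<or> (\<forall>j\<ge>k. g j = 0)"
  using assms convex_ratios_zero_iff[OF assms(1)] by force

lemma convex_ratios_log_concave:
  assumes g: "convex_ratios g s n"
  shows "g (k - 1) * g (k + 1) \<le> (g k)^2"
proof (cases "g (k - 1) = 0 \<or> g (k + 1) = 0")
  case False
  then have pos: "g (k - 1) > 0" "g k > 0" and k: "k \<ge> s + 1"
    using convex_ratios_zero_iff[OF g] convex_ratios_pos_iff[OF g] by auto
  have "g (k + 1) / g k \<le> g k / g (k - 1)"
    using convex_ratios_antitone[OF g k] unfolding ratio_def by simp
  with pos show ?thesis
    by (simp add: divide_simps power2_eq_square mult.commute)
qed auto

lemma convex_ratios_ratio_convexity: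
  assumes g: "convex_ratios g s n"
  shows "0 \<le> (g k)^2 * g (k+1) - 2 * (g (k+1))^2 * g (k-1) + g (k+2) * g k * g (k-1)"
proof (cases "g (k - 1) = 0 \<or> g (k + 1) = 0")
  case True
  then consider "g (k - 1) = 0" | "g (k + 1) = 0" "g (k + 2) = 0"
    using convex_ratios_zero_iff[OF g] by force
  then show ?thesis
    using convex_ratios_nonneg[OF g] by cases simp_all
next
  case False
  then have pos: "g (k - 1) > 0" "g k > 0" "g (k + 1) > 0" and k: "k \<ge> s + 1"
    using convex_ratios_zero_iff[OF g] convex_ratios_pos_iff[OF g] by auto
  have "0 \<le> g k / g (k - 1) - 2 * (g (k + 1) / g k) + g (k + 2) / g (k + 1)"
    using convex_ratios_convex[OF g k] unfolding ratio_def by (simp add: ac_simps)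
  then have "0 \<le> (g (k - 1) * g k * g (k + 1))
      * (g k / g (k - 1) - 2 * (g (k + 1) / g k) + g (k + 2) / g (k + 1))"
    using pos by simp
  also have "\<dots> = (g k)^2 * g (k+1) - 2 * (g (k+1))^2 * g (k-1) + g (k+2) * g k * g (k-1)"
    using pos by (simp add: field_simps power2_eq_square)
  finally show ?thesis .
qed

lemma reflected_ratio_convexity:
  assumes "convex_ratios (\<lambda>j. g (-j)) s n"
  shows "0 \<le> (g k)^2 * g (k-1) - 2 * (g (k-1))^2 * g (k+1) + g (k-2) * g k * g (k+1)"
  using convex_ratios_ratio_convexity[OF assms, of "-k"] by (simp add: ac_simps)

lemma convex_ratios_ineq2:
  assumes g: "convex_ratios g s n" and g': "convex_ratios (\<lambda>j. g (-j)) s' n'"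
  shows "0 \<le> (g k)^3 - g (k-1) * g k * g (k+1) - (g (k-1))^2 * g (k+2) + g (k-2) * g k * g (k+2)"
proof (cases "g k = 0")
  case True
  then show ?thesis
    using convex_ratios_vanishing[OF g True] by auto
next
  case False
  then have pos: "g k > 0"
    using convex_ratios_nonneg[OF g, of k] by simp
  have "0 \<le> ((g (k-1))^2 - g (k-2) * g k) * ((g (k+1))^2 - g k * g (k+2))"
    using convex_ratios_log_concave[OF g, of "k - 1"] convex_ratios_log_concave[OF g, of "k + 1"]
    by (intro mult_nonneg_nonneg) (simp_all add: ac_simps)
  moreover have "0 \<le> g (k+1)
      * ((g k)^2 * g (k-1) - 2 * (g (k-1))^2 * g (k+1) + g (k-2) * g k * g (k+1))"
    using convex_ratios_nonneg[OF g] reflected_ratio_convexity[OF g'] by simp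
  moreover have "g k
      * ((g k)^3 - g (k-1) * g k * g (k+1) - (g (k-1))^2 * g (k+2) + g (k-2) * g k * g (k+2))
    = ((g (k-1))^2 - g (k-2) * g k) * ((g (k+1))^2 - g k * g (k+2))
      + g (k+1) * ((g k)^2 * g (k-1) - 2 * (g (k-1))^2 * g (k+1) + g (k-2) * g k * g (k+1))
      + ((g k)^2 - g (k-1) * g (k+1))^2"
    by (simp add: algebra_simps power2_eq_square power3_eq_cube)
  ultimately have "0 \<le> g k
      * ((g k)^3 - g (k-1) * g k * g (k+1) - (g (k-1))^2 * g (k+2) + g (k-2) * g k * g (k+2))"
    by (smt (verit) zero_le_power2)
  with pos show ?thesis
    by (simp add: zero_le_mult_iff)
qed

lemma convex_ratios_ineq4:
  assumes g: "convex_ratios g s n"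
  shows "0 \<le> 2 * (g k)^3 - 3 * g (k-1) * g k * g (k+1) + (g (k-1))^2 * g (k+2)"
proof (cases "g k = 0")
  case True
  then show ?thesis
    using convex_ratios_nonneg[OF g] by simp
next
  case False
  then have pos: "g k > 0"
    using convex_ratios_nonneg[OF g, of k] by simp
  have "0 \<le> g (k-1) * ((g k)^2 * g (k+1) - 2 * (g (k+1))^2 * g (k-1) + g (k+2) * g k * g (k-1))"
    using convex_ratios_nonneg[OF g] convex_ratios_ratio_convexity[OF g] by simp
  moreover have "g k * (2 * (g k)^3 - 3 * g (k-1) * g k * g (k+1) + (g (k-1))^2 * g (k+2))
    = g (k-1) * ((g k)^2 * g (k+1) - 2 * (g (k+1))^2 * g (k-1) + g (k+2) * g k * g (k-1))
      + 2 * ((g k)^2 - g (k-1) * g (k+1))^2"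
    by (simp add: algebra_simps power2_eq_square power3_eq_cube)
  ultimately have "0 \<le> g k * (2 * (g k)^3 - 3 * g (k-1) * g k * g (k+1) + (g (k-1))^2 * g (k+2))"
    by (smt (verit) zero_le_power2)
  with pos show ?thesis
    by (simp add: zero_le_mult_iff)
qed

lemma convex_ratios_ineq6:
  assumes g: "convex_ratios g s n" and g': "convex_ratios (\<lambda>j. g (-j)) s' n'"
  shows "0 \<le> 2 * (g k)^2 * g (k-2) - 3 * g (k-2) * g (k-1) * g (k+1) + g (k+1) * g k * g (k-3)"
proof (cases "g (k-1) = 0")
  case True
  then show ?thesis
    using convex_ratios_nonneg[OF g] by simp
next
  case False
  then have pos: "g (k-1) > 0"
    using convex_ratios_nonneg[OF g, of "k-1"] by simp
  have "0 \<le> (g (k-1))^2 * g (k-2) - 2 * (g (k-2))^2 * g k + g (k-3) * g (k-1) * g k"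
    using reflected_ratio_convexity[OF g', of "k - 1"] by (simp add: ac_simps)
  then have "0 \<le> g (k+1)
      * ((g (k-1))^2 * g (k-2) - 2 * (g (k-2))^2 * g k + g (k-3) * g (k-1) * g k)"
    using convex_ratios_nonneg[OF g] by simp
  moreover have "0 \<le> g (k-2)
      * ((g k)^2 * g (k-1) - 2 * (g (k-1))^2 * g (k+1) + g (k-2) * g k * g (k+1))"
    using convex_ratios_nonneg[OF g] reflected_ratio_convexity[OF g'] by simp
  moreover have "g (k-1)
      * (2 * (g k)^2 * g (k-2) - 3 * g (k-2) * g (k-1) * g (k+1) + g (k+1) * g k * g (k-3))
    = g (k+1) * ((g (k-1))^2 * g (k-2) - 2 * (g (k-2))^2 * g k + g (k-3) * g (k-1) * g k)
      + 2 * g (k-2) * ((g k)^2 * g (k-1) - 2 * (g (k-1))^2 * g (k+1) + g (k-2) * g k * g (k+1))"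
    by (simp add: algebra_simps power2_eq_square power3_eq_cube)
  ultimately have "0 \<le> g (k-1)
      * (2 * (g k)^2 * g (k-2) - 3 * g (k-2) * g (k-1) * g (k+1) + g (k+1) * g k * g (k-3))"
    by linarith
  with pos show ?thesis
    by (simp add: zero_le_mult_iff)
qed

lemma pmf_bernoulli_sum_Cons:
  assumes "0 \<le> p" "p \<le> 1"
  shows "pmf (bernoulli_sum_pmf (p # ps)) k =
     (1 - p) * pmf (bernoulli_sum_pmf ps) k + p * pmf (bernoulli_sum_pmf ps) (k - 1)"
proof -
  have shift: "pmf (map_pmf (\<lambda>s. c + s) M) k = pmf M (k - c)" for c :: int and M
    using pmf_map_inj'[of "\<lambda>s. c + s" M "k - c"] by (simp add: inj_def)
  have "bernoulli_sum_pmf (p # ps) = bind_pmf (bernoulli_pmf p)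
      (\<lambda>b. map_pmf (\<lambda>s. (if b then 1 else 0) + s) (bernoulli_sum_pmf ps))"
    by (simp add: pair_pmf_def map_pmf_def bind_assoc_pmf bind_return_pmf)
  then show ?thesis
    using assms by (simp add: pmf_bind shift)
qed

lemma pmf_bernoulli_sum_flip:
  assumes "\<forall>p\<in>set ps. 0 \<le> p \<and> p \<le> 1"
  shows "pmf (bernoulli_sum_pmf (map (\<lambda>p. 1 - p) ps)) k =
    pmf (bernoulli_sum_pmf ps) (int (length ps) - k)"
  using assms
proof (induction ps arbitrary: k)
  case Nil
  then show ?case
    by (simp add: pmf_return indicator_def)
next
  case (Cons p ps)
  let ?g = "pmf (bernoulli_sum_pmf ps)"
    and ?g' = "pmf (bernoulli_sum_pmf (map (\<lambda>p. 1 - p) ps))"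
    and ?m = "int (length ps)"
  have p: "0 \<le> p" "p \<le> 1"
    using Cons.prems by auto
  have "pmf (bernoulli_sum_pmf (map (\<lambda>p. 1 - p) (p # ps))) k = p * ?g' k + (1 - p) * ?g' (k - 1)"
    using pmf_bernoulli_sum_Cons[of "1 - p" "map (\<lambda>p. 1 - p) ps" k] p
    by (simp del: bernoulli_sum_pmf.simps)
  also have "\<dots> = (1 - p) * ?g (?m + 1 - k) + p * ?g (?m + 1 - k - 1)"
    using Cons by (simp add: algebra_simps)
  also have "\<dots> = pmf (bernoulli_sum_pmf (p # ps)) (int (length (p # ps)) - k)"
    using pmf_bernoulli_sum_Cons[OF p, of ps] by (simp del: bernoulli_sum_pmf.simps add: ac_simps)
  finally show ?case .
qed

lemma bernoulli_sum_convex_ratios: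
  assumes "\<forall>p\<in>set ps. 0 \<le> p \<and> p \<le> 1"
  shows "\<exists>s n. convex_ratios (pmf (bernoulli_sum_pmf ps)) s n"
  using assms
proof (induction ps)
  case Nil
  have "convex_ratios (pmf (bernoulli_sum_pmf [])) 0 0"
    unfolding convex_ratios_def ratio_def by (auto simp: pmf_return indicator_def)
  then show ?case
    by blast
next
  case (Cons p ps)
  define g where "g = pmf (bernoulli_sum_pmf ps)"
  have p: "0 \<le> p" "p \<le> 1"
    using Cons.prems by auto
  obtain s n where g: "convex_ratios g s n"
    using Cons g_def by auto
  have rec: "pmf (bernoulli_sum_pmf (p # ps)) = (\<lambda>j. (1 - p) * g j + p * g (j - 1))"
    using pmf_bernoulli_sum_Cons[OF p] unfolding g_def by auto
  consider "p = 0" | "p = 1" | "0 < p" "p < 1"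
    using p by linarith
  then show ?case
  proof cases
    case 1
    then show ?thesis
      using g unfolding rec by auto
  next
    case 2
    then show ?thesis
      using convex_ratios_shift[OF g, of "-1"] unfolding rec by auto
  next
    case 3
    define x where "x = p / (1 - p)"
    have "x > 0"
      using 3 unfolding x_def by simp
    then have "convex_ratios (\<lambda>j. (1 - p) * (g j + x * g (j - 1))) s (Suc n)"
      using 3 by (intro convex_ratios_scale convex_ratios_conv g) simp_all
    moreover have "(\<lambda>j. (1 - p) * (g j + x * g (j - 1))) = pmf (bernoulli_sum_pmf (p # ps))"
      unfolding rec x_def using 3 by (auto simp: field_simps)
    ultimately show ?thesis
      by auto
  qed
qed

lemma bernoulli_sum_reflected_convex_ratios:
  assumes ps: "\<forall>p\<in>set ps. 0 \<le> p \<and> p \<le> 1"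
  shows "\<exists>s n. convex_ratios (\<lambda>j. pmf (bernoulli_sum_pmf ps) (-j)) s n"
proof -
  let ?flip = "map (\<lambda>p. 1 - p) ps" and ?m = "int (length ps)"
  have "\<forall>p\<in>set ?flip. 0 \<le> p \<and> p \<le> 1"
    using ps by auto
  then obtain s n where "convex_ratios (pmf (bernoulli_sum_pmf ?flip)) s n"
    using bernoulli_sum_convex_ratios by blast
  then have "convex_ratios (\<lambda>j. pmf (bernoulli_sum_pmf ?flip) (j + ?m)) (s - ?m) n"
    by (rule convex_ratios_shift)
  moreover have "(\<lambda>j. pmf (bernoulli_sum_pmf ?flip) (j + ?m)) = (\<lambda>j. pmf (bernoulli_sum_pmf ps) (-j))"
    using pmf_bernoulli_sum_flip[OF ps] by simp
  ultimately show ?thesis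
    by auto
qed

theorem corollaryA3:
  fixes ps :: "real list" and g :: "int \<Rightarrow> real" and k :: int
  assumes "length ps \<ge> 1"
    and "\<forall>p\<in>set ps. 0 \<le> p \<and> p \<le> 1"
    and "g = pmf (bernoulli_sum_pmf ps)"
  shows "((g k)^2 * g (k+1) - 2 * (g (k+1))^2 * g (k-1) + g (k+2) * g k * g (k-1) \<ge> 0) \<and>
    ((g k)^3 - g (k-1) * g k * g (k+1) - (g (k-1))^2 * g (k+2) + g (k-2) * g k * g (k+2) \<ge> 0) \<and>
    ((g k)^3 - g (k-1) * g k * g (k+1) - (g (k+1))^2 * g (k-2) + g (k-2) * g k * g (k+2) \<ge> 0) \<and>
    (2 * (g k)^3 - 3 * g (k-1) * g k * g (k+1) + (g (k-1))^2 * g (k+2) \<ge> 0) \<and>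
    (2 * (g k)^3 - 3 * g (k-1) * g k * g (k+1) + (g (k+1))^2 * g (k-2) \<ge> 0) \<and>
    (2 * (g k)^2 * g (k-2) - 3 * g (k-2) * g (k-1) * g (k+1) + g (k+1) * g k * g (k-3) \<ge> 0)"
proof -
  obtain s n where g: "convex_ratios g s n"
    using bernoulli_sum_convex_ratios[OF assms(2)] assms(3) by blast
  obtain s' n' where g': "convex_ratios (\<lambda>j. g (-j)) s' n'"
    using bernoulli_sum_reflected_convex_ratios[OF assms(2)] assms(3) by blast
  have g'': "convex_ratios (\<lambda>j. (\<lambda>j. g (-j)) (-j)) s n"
    using g by simp
  show ?thesis
    using convex_ratios_ratio_convexity[OF g, of k]
      convex_ratios_ineq2[OF g g', of k] convex_ratios_ineq2[OF g' g'', of "-k"]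
      convex_ratios_ineq4[OF g, of k] convex_ratios_ineq4[OF g', of "-k"]
      convex_ratios_ineq6[OF g g', of k]
    by (simp add: ac_simps)
qed

end
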